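(* For all $\alpha,\varepsilon>0$ and $k\in\mathbb{N}$, there exist $\eta>0$ and $N\in\mathbb{N}$ such that for all $n>N$ the following holds. Suppose $f\colon[n]\to[0,1]$ is such that every interval $J\subseteq[n]$ of length at least $\lfloor\eta n\rfloor$ satisfies \[ \Big|\frac{1}{|J|}\sum_{t\in J}f(t)-\alpha\Big|\le\eta. \] Then for all $x,y\in[k]$, \[ \sum_{t=\lceil\eta n\rceil}^{\lfloor(1-\eta)n\rfloor}f(t)\binom{t-1}{x}\binom{n-t}{y}\ge(1-\varepsilon)\alpha\binom{n}{x+y+1}. \]
   Context: An interval $J\subseteq[n]$ is a set of consecutive integers; its length is $|J|$. *)

theory Defs
  imports "HOL-Analysis.Analysis"
begin

text \<open>[n] = {1..n}. An interval of [n] is a set {a..b} of consecutive integers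
  with 1 <= a <= b <= n (nonempty, so the average is defined); its length is b - a + 1.\<close>

definition interval_of :: "nat \<Rightarrow> nat set \<Rightarrow> bool" where
  "interval_of n J \<longleftrightarrow> (\<exists>a b. 1 \<le> a \<and> a \<le> b \<and> b \<le> n \<and> J = {a..b})"

end

theory Submission
  imports Defs
begin

text \<open>For \<open>a < b\<close> let \<open>W(a,b) = C(a-1,x-1) C(n-b,y-1)\<close>: it counts the \<open>(x+y)\<close>-subsets of
  \<open>[n]\<close> whose \<open>x\<close>-th and \<open>(x+1)\<close>-th elements are \<open>a\<close> and \<open>b\<close>. Inserting a point \<open>t\<close> of the gap
  \<open>a < t < b\<close> produces every \<open>(x+y+1)\<close>-subset with \<open>(x+1)\<close>-th element \<open>t\<close> exactly once, so
  \<open>C(t-1,x) C(n-t,y)\<close> is the sum of \<open>W(a,b)\<close> over the gaps containing \<open>t\<close>,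
  \<open>\<Sum> W(a,b) (b-a-1) = C(n,x+y+1)\<close> and \<open>\<Sum> W(a,b) = C(n,x+y)\<close>.
  Hence the weighted sum of \<open>f\<close> over the window \<open>[\<eta>n, (1-\<eta>)n]\<close> is \<open>\<Sum> W(a,b)\<close> times the sum of \<open>f\<close>
  over the gap \<open>(a,b)\<close> cut down to the window. By the interval hypothesis each such sum is at least
  \<open>\<alpha> - \<eta>\<close> times the length of the gap minus a loss of at most \<open>3\<eta>n + 1\<close> (the cut-off and
  intervals shorter than \<open>\<eta>n\<close>). As \<open>C(n,x+y) = (x+y+1)/(n-x-y) C(n,x+y+1)\<close>, the total loss is
  an \<open>O(\<eta>k + k/n)\<close> fraction of the main term.\<close>

lemma sum_lessThan_choose_pred:
  assumes "1 \<le> y"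
  shows "(\<Sum>j<d. j choose (y - 1)) = d choose y"
proof (induction d)
  case (Suc d)
  with assms show ?case by (cases y) simp_all
qed (use assms in simp)

lemma sum_atLeastAtMost_pred_choose:
  assumes "1 \<le> x"
  shows "(\<Sum>a\<in>{1..t}. (a - 1) choose (x - 1)) = t choose x"
proof -
  have "(\<Sum>a\<in>{1..t}. (a - 1) choose (x - 1)) = (\<Sum>j<t. j choose (x - 1))"
    by (rule sum.reindex_bij_witness[where i = Suc and j = "\<lambda>a. a - 1"]) auto
  also have "\<dots> = t choose x" by (rule sum_lessThan_choose_pred[OF assms])
  finally show ?thesis .
qed

lemma sum_greaterThanAtMost_diff_choose:
  assumes "1 \<le> y" "t \<le> n"
  shows "(\<Sum>b\<in>{t<..n}. (n - b) choose (y - 1)) = (n - t) choose y"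
proof -
  have "(\<Sum>b\<in>{t<..n}. (n - b) choose (y - 1)) = (\<Sum>j<n - t. j choose (y - 1))"
    by (rule sum.reindex_bij_witness[where i = "\<lambda>j. n - j" and j = "\<lambda>b. n - b"]) auto
  also have "\<dots> = (n - t) choose y" by (rule sum_lessThan_choose_pred[OF assms(1)])
  finally show ?thesis .
qed

lemma sum_pred_choose_times_diff_choose:
  "(\<Sum>t\<in>{1..n}. ((t - 1) choose x) * ((n - t) choose y)) = n choose (x + y + 1)"
proof (induction n arbitrary: y)
  case (Suc n)
  show ?case
  proof (cases y)
    case 0
    then show ?thesis using sum_atLeastAtMost_pred_choose[of "x + 1" "Suc n"] by simp
  next
    case (Suc y')
    have "(\<Sum>t\<in>{1..Suc n}. ((t - 1) choose x) * ((Suc n - t) choose y))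
        = (\<Sum>t\<in>{1..n}. ((t - 1) choose x) * ((Suc n - t) choose y))"
      using Suc by simp
    also have "\<dots> = (\<Sum>t\<in>{1..n}. ((t - 1) choose x) * ((n - t) choose y))
                  + (\<Sum>t\<in>{1..n}. ((t - 1) choose x) * ((n - t) choose y'))"
      by (subst sum.distrib[symmetric], rule sum.cong) (auto simp: Suc Suc_diff_le algebra_simps)
    also have "\<dots> = Suc n choose (x + y + 1)" using Suc.IH Suc by simp
    finally show ?thesis .
  qed
qed simp

definition gap_weight :: "nat \<Rightarrow> nat \<Rightarrow> nat \<Rightarrow> nat \<Rightarrow> nat \<Rightarrow> real" where
  "gap_weight n x y a b =
     (if a < b then real (((a - 1) choose (x - 1)) * ((n - b) choose (y - 1))) else 0)"

lemma gap_weight_nonneg: "0 \<le> gap_weight n x y a b"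
  by (simp add: gap_weight_def)

lemma choose_times_choose_eq_sum_gap_weight:
  assumes "1 \<le> x" "1 \<le> y" "t \<in> {1..n}"
  shows "real ((t - 1) choose x) * real ((n - t) choose y) =
     (\<Sum>a\<in>{1..n}. \<Sum>b\<in>{1..n}. if a < t \<and> t < b then gap_weight n x y a b else 0)"
proof -
  have "real ((t - 1) choose x) = (\<Sum>a\<in>{1..t - 1}. real ((a - 1) choose (x - 1)))"
    using sum_atLeastAtMost_pred_choose[OF assms(1), of "t - 1"] by (metis of_nat_sum)
  also have "\<dots> = (\<Sum>a\<in>{1..n}. if a < t then real ((a - 1) choose (x - 1)) else 0)"
  proof -
    have "{a\<in>{1..n}. a < t} = {1..t - 1}" using assms(3) by auto
    then show ?thesis by (simp add: sum.inter_filter[symmetric])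
  qed
  finally have left: "real ((t - 1) choose x) = \<dots>" .
  have "real ((n - t) choose y) = (\<Sum>b\<in>{t<..n}. real ((n - b) choose (y - 1)))"
    using sum_greaterThanAtMost_diff_choose[OF assms(2), of t n] assms(3) by (simp flip: of_nat_sum)
  also have "\<dots> = (\<Sum>b\<in>{1..n}. if t < b then real ((n - b) choose (y - 1)) else 0)"
  proof -
    have "{b\<in>{1..n}. t < b} = {t<..n}" using assms(3) by auto
    then show ?thesis by (simp add: sum.inter_filter[symmetric])
  qed
  finally have right: "real ((n - t) choose y) = \<dots>" .
  show ?thesis unfolding left right sum_product
    by (intro sum.cong refl) (auto simp: gap_weight_def)
qed

lemma sum_choose_times_choose_eq_gap_sums:
  fixes h :: "nat \<Rightarrow> real"
  assumes "1 \<le> x" "1 \<le> y" "T \<subseteq> {1..n}"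
  shows "(\<Sum>t\<in>T. h t * real ((t - 1) choose x) * real ((n - t) choose y)) =
     (\<Sum>a\<in>{1..n}. \<Sum>b\<in>{1..n}. gap_weight n x y a b * (\<Sum>t\<in>T. if a < t \<and> t < b then h t else 0))"
proof -
  have "(\<Sum>t\<in>T. h t * real ((t - 1) choose x) * real ((n - t) choose y)) =
     (\<Sum>t\<in>T. h t * (\<Sum>a\<in>{1..n}. \<Sum>b\<in>{1..n}. if a < t \<and> t < b then gap_weight n x y a b else 0))"
    using choose_times_choose_eq_sum_gap_weight[OF assms(1,2)] assms(3)
    by (intro sum.cong) (auto simp: mult.assoc)
  also have "\<dots> =
     (\<Sum>t\<in>T. \<Sum>a\<in>{1..n}. \<Sum>b\<in>{1..n}. gap_weight n x y a b * (if a < t \<and> t < b then h t else 0))"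
    by (simp add: sum_distrib_left if_distrib mult.commute cong: if_cong)
  also have "\<dots> = (\<Sum>a\<in>{1..n}. \<Sum>b\<in>{1..n}. \<Sum>t\<in>T. gap_weight n x y a b * (if a < t \<and> t < b then h t else 0))"
    by (subst sum.swap) (simp add: sum.swap[of _ T])
  finally show ?thesis by (simp add: sum_distrib_left)
qed

lemma sum_gap_weight_times_gap:
  assumes "1 \<le> x" "1 \<le> y"
  shows "(\<Sum>a\<in>{1..n}. \<Sum>b\<in>{1..n}. gap_weight n x y a b * (real b - real a - 1))
     = real (n choose (x + y + 1))"
proof -
  have gap: "(\<Sum>t\<in>{1..n}. if a < t \<and> t < b then 1 else 0) = real b - real a - 1"
    if "a \<in> {1..n}" "b \<in> {1..n}" "a < b" for a b
  proof -
    have "{t\<in>{1..n}. a < t \<and> t < b} = {a<..<b}" using that by auto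
    then show ?thesis using that(3) by (simp add: sum.inter_filter[symmetric])
  qed
  have "real (n choose (x + y + 1)) = (\<Sum>t\<in>{1..n}. 1 * real ((t - 1) choose x) * real ((n - t) choose y))"
    by (subst sum_pred_choose_times_diff_choose[symmetric]) (simp add: of_nat_sum)
  also have "\<dots> = (\<Sum>a\<in>{1..n}. \<Sum>b\<in>{1..n}. gap_weight n x y a b * (\<Sum>t\<in>{1..n}. if a < t \<and> t < b then 1 else 0))"
    by (rule sum_choose_times_choose_eq_gap_sums[OF assms order_refl])
  also have "\<dots> = (\<Sum>a\<in>{1..n}. \<Sum>b\<in>{1..n}. gap_weight n x y a b * (real b - real a - 1))"
    using gap by (intro sum.cong refl) (auto simp: gap_weight_def)
  finally show ?thesis by simp
qed

lemma sum_gap_weight: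
  assumes "1 \<le> x" "1 \<le> y"
  shows "(\<Sum>a\<in>{1..n}. \<Sum>b\<in>{1..n}. gap_weight n x y a b) = real (n choose (x + y))"
proof -
  have row: "(\<Sum>b\<in>{1..n}. gap_weight n x y a b) = real ((a - 1) choose (x - 1)) * real ((n - a) choose y)"
    if "a \<in> {1..n}" for a
  proof -
    have "{b\<in>{1..n}. a < b} = {a<..n}" using that by auto
    then have "(\<Sum>b\<in>{1..n}. gap_weight n x y a b)
        = real ((a - 1) choose (x - 1)) * (\<Sum>b\<in>{a<..n}. real ((n - b) choose (y - 1)))"
      by (simp add: gap_weight_def sum.inter_filter[symmetric] sum_distrib_left)
    also have "\<dots> = real ((a - 1) choose (x - 1)) * real ((n - a) choose y)"
      using sum_greaterThanAtMost_diff_choose[OF assms(2), of a n] that by (simp flip: of_nat_sum)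
    finally show ?thesis .
  qed
  have "(\<Sum>a\<in>{1..n}. \<Sum>b\<in>{1..n}. gap_weight n x y a b)
      = real (\<Sum>a\<in>{1..n}. ((a - 1) choose (x - 1)) * ((n - a) choose y))"
    using row by (simp add: of_nat_sum)
  also have "\<dots> = real (n choose (x - 1 + y + 1))"
    by (simp only: sum_pred_choose_times_diff_choose)
  finally show ?thesis using assms(1) by simp
qed

definition long_intervals_dense :: "nat \<Rightarrow> real \<Rightarrow> real \<Rightarrow> (nat \<Rightarrow> real) \<Rightarrow> bool" where
  "long_intervals_dense n L \<beta> f \<longleftrightarrow>
     (\<forall>J. interval_of n J \<and> L \<le> real (card J) \<longrightarrow> \<beta> * real (card J) \<le> sum f J)"

lemma long_intervals_dense_if_averages_close:
  assumes "\<forall>J. interval_of n J \<and> L \<le> real (card J) \<longrightarrow> \<bar>sum f J / real (card J) - \<alpha>\<bar> \<le> \<eta>"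
  shows "long_intervals_dense n L (\<alpha> - \<eta>) f"
  unfolding long_intervals_dense_def
proof (intro allI impI)
  fix J assume J: "interval_of n J \<and> L \<le> real (card J)"
  then have "0 < real (card J)" by (auto simp: interval_of_def)
  moreover have "\<alpha> - \<eta> \<le> sum f J / real (card J)" using assms J by force
  ultimately show "(\<alpha> - \<eta>) * real (card J) \<le> sum f J" by (simp add: pos_le_divide_eq)
qed

lemma sum_atLeastAtMost_ge_if_dense:
  fixes f :: "nat \<Rightarrow> real"
  assumes dense: "long_intervals_dense n L \<beta> f" and f: "\<forall>t\<in>{1..n}. 0 \<le> f t"
    and "0 \<le> \<beta>" "0 \<le> L" "1 \<le> p" "q \<le> n"
  shows "\<beta> * (real (card {p..q}) - L) \<le> sum f {p..q}"
proof (cases "p \<le> q \<and> L \<le> real (card {p..q})")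
  case True
  then have "interval_of n {p..q}" using assms(5,6) by (auto simp: interval_of_def)
  then have "\<beta> * real (card {p..q}) \<le> sum f {p..q}" using dense True unfolding long_intervals_dense_def by blast
  moreover have "0 \<le> \<beta> * L" using assms(3,4) by simp
  ultimately show ?thesis by (simp add: right_diff_distrib)
next
  case False
  then have "real (card {p..q}) \<le> L" using assms(4) by auto
  then have "\<beta> * (real (card {p..q}) - L) \<le> 0" using assms(3) by (simp add: mult_nonneg_nonpos)
  also have "0 \<le> sum f {p..q}" using f assms(5,6) by (intro sum_nonneg) auto
  finally show ?thesis .
qed

lemma sum_gap_in_window_ge:
  fixes f :: "nat \<Rightarrow> real"
  assumes dense: "long_intervals_dense n L \<beta> f" and f: "\<forall>t\<in>{1..n}. 0 \<le> f t"
    and "0 \<le> \<beta>" "0 \<le> L" "1 \<le> lo" "hi \<le> n" "b \<le> n"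
  shows "\<beta> * (real b - real a - real lo - (real n - real hi) - L)
           \<le> (\<Sum>t\<in>{lo..hi}. if a < t \<and> t < b then f t else 0)"
proof -
  define p where "p = max lo (a + 1)"
  define q where "q = min hi (b - 1)"
  have "{t\<in>{lo..hi}. a < t \<and> t < b} = {p..q}" by (auto simp: p_def q_def)
  then have sum_eq: "(\<Sum>t\<in>{lo..hi}. if a < t \<and> t < b then f t else 0) = sum f {p..q}"
    by (simp add: sum.inter_filter[symmetric])
  have "real b - real a - real lo - (real n - real hi) \<le> real (card {p..q})"
    using assms(5-7) by (simp add: p_def q_def)
  then have "\<beta> * (real b - real a - real lo - (real n - real hi) - L) \<le> \<beta> * (real (card {p..q}) - L)"
    using assms(3) by (intro mult_left_mono) auto
  also have "\<dots> \<le> sum f {p..q}"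
    using sum_atLeastAtMost_ge_if_dense[OF dense f assms(3,4)] assms(5,6) by (simp add: p_def q_def)
  finally show ?thesis unfolding sum_eq .
qed

lemma sum_window_weighted_ge_if_dense:
  fixes f :: "nat \<Rightarrow> real"
  assumes dense: "long_intervals_dense n L \<beta> f" and f: "\<forall>t\<in>{1..n}. 0 \<le> f t"
    and "0 \<le> \<beta>" "0 \<le> L" "1 \<le> lo" "hi \<le> n" "1 \<le> x" "1 \<le> y"
  shows "\<beta> * (real (n choose (x + y + 1)) - (real lo + (real n - real hi) + L - 1) * real (n choose (x + y)))
           \<le> (\<Sum>t\<in>{lo..hi}. f t * real ((t - 1) choose x) * real ((n - t) choose y))"
proof -
  define loss where "loss = real lo + (real n - real hi) + L - 1"
  let ?w = "gap_weight n x y"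
  have "\<beta> * (real (n choose (x + y + 1)) - loss * real (n choose (x + y)))
      = (\<Sum>a\<in>{1..n}. \<Sum>b\<in>{1..n}. ?w a b * (\<beta> * (real b - real a - 1 - loss)))"
    unfolding sum_gap_weight_times_gap[OF assms(7,8), symmetric] sum_gap_weight[OF assms(7,8), symmetric]
    by (simp add: sum_distrib_left sum_subtractf[symmetric] algebra_simps)
  also have "\<dots> \<le> (\<Sum>a\<in>{1..n}. \<Sum>b\<in>{1..n}. ?w a b * (\<Sum>t\<in>{lo..hi}. if a < t \<and> t < b then f t else 0))"
    using sum_gap_in_window_ge[OF dense f assms(3-6)]
    by (intro sum_mono mult_left_mono gap_weight_nonneg) (simp add: loss_def algebra_simps)
  also have "\<dots> = (\<Sum>t\<in>{lo..hi}. f t * real ((t - 1) choose x) * real ((n - t) choose y))"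
    using assms(5,6) by (intro sum_choose_times_choose_eq_gap_sums[symmetric] assms(7,8)) auto
  finally show ?thesis unfolding loss_def .
qed

lemma ceiling_floor_window_bounds:
  fixes \<eta> :: real
  assumes "0 < \<eta>" "0 < n"
  shows "1 \<le> nat \<lceil>\<eta> * real n\<rceil>" and "nat \<lfloor>(1 - \<eta>) * real n\<rfloor> \<le> n"
    and "real (nat \<lceil>\<eta> * real n\<rceil>) + (real n - real (nat \<lfloor>(1 - \<eta>) * real n\<rfloor>))
           + of_int \<lfloor>\<eta> * real n\<rfloor> - 1 \<le> 3 * \<eta> * real n + 1"
proof -
  have pos: "0 < \<eta> * real n" using assms by simp
  then show "1 \<le> nat \<lceil>\<eta> * real n\<rceil>" by linarith
  have "(1 - \<eta>) * real n \<le> real n" using assms by (simp add: algebra_simps)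
  then show "nat \<lfloor>(1 - \<eta>) * real n\<rfloor> \<le> n" by linarith
  have "real (nat \<lceil>\<eta> * real n\<rceil>) < \<eta> * real n + 1" using pos by linarith
  moreover have "real n - real (nat \<lfloor>(1 - \<eta>) * real n\<rfloor>) < \<eta> * real n + 1"
  proof (cases "0 \<le> (1 - \<eta>) * real n")
    case True
    then show ?thesis using floor_correct[of "(1 - \<eta>) * real n"] by (simp add: algebra_simps)
  next
    case False
    then show ?thesis by (simp add: algebra_simps)
  qed
  moreover have "of_int \<lfloor>\<eta> * real n\<rfloor> \<le> \<eta> * real n" by simp
  ultimately show "real (nat \<lceil>\<eta> * real n\<rceil>) + (real n - real (nat \<lfloor>(1 - \<eta>) * real n\<rfloor>))
           + of_int \<lfloor>\<eta> * real n\<rfloor> - 1 \<le> 3 * \<eta> * real n + 1" by linarith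
qed

lemma binomial_diff_times:
  "(n - k) * (n choose k) = Suc k * (n choose Suc k)"
  by (metis binomial_absorb_comp binomial_absorption)

lemma mult_choose_le_mult_choose_Suc:
  fixes c \<delta> :: real
  assumes "c * real (Suc m) \<le> \<delta> * real (n - m)" "m < n"
  shows "c * real (n choose m) \<le> \<delta> * real (n choose Suc m)"
proof (rule mult_left_le_imp_le)
  have "real (n - m) * real (n choose m) = real (Suc m) * real (n choose Suc m)"
    by (metis binomial_diff_times of_nat_mult)
  then have "real (n - m) * (c * real (n choose m)) = c * real (Suc m) * real (n choose Suc m)"
    by (metis mult.assoc mult.left_commute)
  also have "\<dots> \<le> real (n - m) * (\<delta> * real (n choose Suc m))"
    using mult_right_mono[OF assms(1), of "real (n choose Suc m)"] by (simp add: ac_simps)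
  finally show "real (n - m) * (c * real (n choose m)) \<le> real (n - m) * (\<delta> * real (n choose Suc m))" .
  show "0 < real (n - m)" using assms(2) by simp
qed

lemma loss_times_choose_le:
  fixes D \<eta> e :: real
  assumes "D \<le> 3 * \<eta> * real n + 1" "0 \<le> \<eta>" "24 * \<eta> * real (Suc m) \<le> e"
    and "8 * real (Suc m) \<le> e * real n" "e \<le> 1"
  shows "D * real (n choose m) \<le> e / 2 * real (n choose Suc m)"
proof (rule mult_choose_le_mult_choose_Suc)
  have "e * real n \<le> 1 * real n" using assms(5) by (intro mult_right_mono) auto
  then have "real (8 * Suc m) \<le> real n" using assms(4) by simp
  then have "8 * Suc m \<le> n" by (simp only: of_nat_le_iff)
  then show "m < n" by simp
  have n_half: "real n \<le> 2 * real (n - m)" using \<open>8 * Suc m \<le> n\<close> by simp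
  have "D * real (Suc m) \<le> (3 * \<eta> * real n + 1) * real (Suc m)"
    using assms(1) by (rule mult_right_mono) simp
  also have "\<dots> = real n / 8 * (24 * \<eta> * real (Suc m)) + real (Suc m)" by (simp add: algebra_simps)
  also have "\<dots> \<le> real n / 8 * e + e * real n / 8"
    using assms(3,4) by (intro add_mono mult_left_mono) auto
  also have "\<dots> \<le> e / 2 * real (n - m)"
  proof -
    have "0 \<le> 24 * \<eta> * real (Suc m)" using assms(2) by simp
    then have "0 \<le> e" using assms(3) by linarith
    then show ?thesis using mult_left_mono[OF n_half] by (simp add: algebra_simps)
  qed
  finally show "D * real (Suc m) \<le> e / 2 * real (n - m)" .
qed

lemma perturbed_product_ge:
  fixes \<alpha> \<eta> e \<epsilon> C E :: real
  assumes "0 < \<alpha>" "0 \<le> e" "e \<le> 1" "e \<le> \<epsilon>" "\<eta> \<le> \<alpha> * e / 4" "0 \<le> C" "E \<le> e / 2 * C"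
  shows "(1 - \<epsilon>) * \<alpha> * C \<le> (\<alpha> - \<eta>) * (C - E)"
proof -
  have "\<alpha> * e \<le> \<alpha>" using assms by (intro mult_right_le_one_le) auto
  then have "\<eta> \<le> \<alpha>" using assms(1,5) by linarith
  have "e * C \<le> 2 * C" using assms by (intro mult_right_mono) auto
  have "(1 - \<epsilon>) * \<alpha> * C \<le> (1 - e) * \<alpha> * C" using assms by (intro mult_right_mono) auto
  also have "\<dots> \<le> (\<alpha> * (1 - e / 4)) * ((1 - e / 2) * C)"
    using assms by (simp add: algebra_simps)
  also have "\<dots> \<le> (\<alpha> - \<eta>) * (C - E)"
    using assms \<open>\<eta> \<le> \<alpha>\<close> \<open>e * C \<le> 2 * C\<close> by (intro mult_mono) (auto simp: algebra_simps)
  finally show ?thesis .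
qed

lemma sum_window_weighted_ge:
  fixes f :: "nat \<Rightarrow> real" and \<alpha> \<eta> e \<epsilon> :: real
  assumes "0 < \<alpha>" "0 < e" "e \<le> 1" "e \<le> \<epsilon>" "0 < \<eta>" "\<eta> \<le> \<alpha> * e / 4"
    and "24 * \<eta> * real (x + y + 1) \<le> e" "8 * real (x + y + 1) \<le> e * real n"
    and f: "\<forall>t\<in>{1..n}. 0 \<le> f t"
    and avg: "\<forall>J. interval_of n J \<and> of_int \<lfloor>\<eta> * real n\<rfloor> \<le> real (card J) \<longrightarrow>
                 \<bar>sum f J / real (card J) - \<alpha>\<bar> \<le> \<eta>"
    and "1 \<le> x" "1 \<le> y"
  shows "(1 - \<epsilon>) * \<alpha> * real (n choose (x + y + 1))
           \<le> (\<Sum>t\<in>{nat \<lceil>\<eta> * real n\<rceil>..nat \<lfloor>(1 - \<eta>) * real n\<rfloor>}.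
                 f t * real ((t - 1) choose x) * real ((n - t) choose y))"
proof -
  define lo where "lo = nat \<lceil>\<eta> * real n\<rceil>"
  define hi where "hi = nat \<lfloor>(1 - \<eta>) * real n\<rfloor>"
  define loss where "loss = real lo + (real n - real hi) + of_int \<lfloor>\<eta> * real n\<rfloor> - 1"
  have "0 < n" using assms(2,8) by (auto intro: ccontr)
  then have window: "1 \<le> lo" "hi \<le> n" "loss \<le> 3 * \<eta> * real n + 1"
    using ceiling_floor_window_bounds[OF assms(5)] unfolding lo_def hi_def loss_def by auto
  have "\<alpha> * e \<le> \<alpha>" using assms(1-3) by (intro mult_right_le_one_le) auto
  then have "\<eta> \<le> \<alpha>" using assms(1,6) by linarith
  have "loss * real (n choose (x + y)) \<le> e / 2 * real (n choose Suc (x + y))"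
    using assms(3,5,7,8) by (intro loss_times_choose_le[OF window(3)]) auto
  then have "(1 - \<epsilon>) * \<alpha> * real (n choose (x + y + 1))
      \<le> (\<alpha> - \<eta>) * (real (n choose (x + y + 1)) - loss * real (n choose (x + y)))"
    using assms(1-4,6) by (intro perturbed_product_ge) auto
  also have "\<dots> \<le> (\<Sum>t\<in>{lo..hi}. f t * real ((t - 1) choose x) * real ((n - t) choose y))"
    unfolding loss_def
    using long_intervals_dense_if_averages_close[OF avg] f window(1,2) assms(5,11,12) \<open>\<eta> \<le> \<alpha>\<close> \<open>0 < n\<close>
    by (intro sum_window_weighted_ge_if_dense) auto
  finally show ?thesis unfolding lo_def hi_def .
qed

theorem lemma3p5:
  fixes \<alpha> \<epsilon> :: real and k :: nat
  assumes "\<alpha> > 0" and "\<epsilon> > 0"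
  shows "\<exists>\<eta>::real. \<eta> > 0 \<and> (\<exists>N::nat. \<forall>n>N. \<forall>f :: nat \<Rightarrow> real.
           ((\<forall>t\<in>{1..n}. 0 \<le> f t \<and> f t \<le> 1) \<and>
            (\<forall>J. interval_of n J \<and> real (card J) \<ge> of_int \<lfloor>\<eta> * real n\<rfloor> \<longrightarrow>
                 \<bar>(\<Sum>t\<in>J. f t) / real (card J) - \<alpha>\<bar> \<le> \<eta>))
           \<longrightarrow> (\<forall>x\<in>{1..k}. \<forall>y\<in>{1..k}.
                 (\<Sum>t\<in>{nat \<lceil>\<eta> * real n\<rceil>..nat \<lfloor>(1 - \<eta>) * real n\<rfloor>}.
                    f t * real ((t - 1) choose x) * real ((n - t) choose y))
                 \<ge> (1 - \<epsilon>) * \<alpha> * real (n choose (x + y + 1))))"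
proof -
  define e where "e = min \<epsilon> 1"
  define K where "K = 2 * real k + 1"
  define \<eta> where "\<eta> = min (\<alpha> * e / 4) (e / (24 * K))"
  have e: "0 < e" "e \<le> 1" "e \<le> \<epsilon>" using assms by (auto simp: e_def)
  have "\<eta> \<le> e / (24 * K)" unfolding \<eta>_def by (rule min.cobounded2)
  then have \<eta>K: "24 * \<eta> * K \<le> e" by (simp add: K_def pos_le_divide_eq mult_ac)
  have "\<eta> \<le> \<alpha> * e / 4" unfolding \<eta>_def by (rule min.cobounded1)
  moreover have "0 < \<eta>" using assms e unfolding \<eta>_def K_def by (simp add: add_pos_nonneg)
  ultimately have \<eta>: "0 < \<eta>" "\<eta> \<le> \<alpha> * e / 4" by auto
  show ?thesis
  proof (intro exI[of _ \<eta>] conjI exI[of _ "nat \<lceil>8 * K / e\<rceil>"] allI impI ballI)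
    fix n :: nat and f :: "nat \<Rightarrow> real" and x y
    assume n: "nat \<lceil>8 * K / e\<rceil> < n" and hyps: "(\<forall>t\<in>{1..n}. 0 \<le> f t \<and> f t \<le> 1) \<and>
        (\<forall>J. interval_of n J \<and> real (card J) \<ge> of_int \<lfloor>\<eta> * real n\<rfloor> \<longrightarrow>
             \<bar>(\<Sum>t\<in>J. f t) / real (card J) - \<alpha>\<bar> \<le> \<eta>)" and "x \<in> {1..k}" "y \<in> {1..k}"
    then have xyK: "real (x + y + 1) \<le> K" by (simp add: K_def)
    have "8 * K / e \<le> real n" using real_nat_ceiling_ge[of "8 * K / e"] n by linarith
    then have "8 * real (x + y + 1) \<le> e * real n"
      using xyK e(1) by (simp add: pos_divide_le_eq mult.commute)
    moreover have "24 * \<eta> * real (x + y + 1) \<le> e"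
      using order_trans[OF mult_left_mono[OF xyK] \<eta>K] \<eta>(1) by simp
    ultimately show "(\<Sum>t\<in>{nat \<lceil>\<eta> * real n\<rceil>..nat \<lfloor>(1 - \<eta>) * real n\<rfloor>}.
             f t * real ((t - 1) choose x) * real ((n - t) choose y))
          \<ge> (1 - \<epsilon>) * \<alpha> * real (n choose (x + y + 1))"
      using hyps \<open>x \<in> {1..k}\<close> \<open>y \<in> {1..k}\<close> assms(1) e \<eta>
      by (intro sum_window_weighted_ge) auto
  qed (fact \<eta>(1))
qed

end
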